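(* Let $A$ and $Z$ be $n\times n$ complex matrices with $0\le A\le I$ and $Z$ positive definite with largest eigenvalue $a$ and smallest eigenvalue $b$. Then $$AZA \le \frac{(a+b)^2}{4ab}\, Z.$$
   Context: $\le$ denotes the Loewner order on Hermitian matrices: $X\le Y$ means $Y-X$ is positive semidefinite. *)

theory Defs
  imports "HOL-Analysis.Analysis"
begin

definition cquad :: "complex^'n^'n \<Rightarrow> complex^'n \<Rightarrow> complex" where
  "cquad M x = (\<Sum>i\<in>UNIV. cnj (x $ i) * (M *v x) $ i)"

definition hermitian_mat :: "complex^'n^'n \<Rightarrow> bool" where
  "hermitian_mat M \<longleftrightarrow> (\<forall>i j. M $ i $ j = cnj (M $ j $ i))"

definition psd_mat :: "complex^'n^'n \<Rightarrow> bool" where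
  "psd_mat M \<longleftrightarrow> hermitian_mat M \<and> (\<forall>x. 0 \<le> Re (cquad M x))"

definition pd_mat :: "complex^'n^'n \<Rightarrow> bool" where
  "pd_mat M \<longleftrightarrow> hermitian_mat M \<and> (\<forall>x. x \<noteq> 0 \<longrightarrow> 0 < Re (cquad M x))"

definition loewner_le :: "complex^'n^'n \<Rightarrow> complex^'n^'n \<Rightarrow> bool" where
  "loewner_le X Y \<longleftrightarrow> psd_mat (Y - X)"

definition mat_eigenvalue :: "complex^'n^'n \<Rightarrow> complex \<Rightarrow> bool" where
  "mat_eigenvalue M l \<longleftrightarrow> (\<exists>v. v \<noteq> 0 \<and> M *v v = l *s v)"

end

theory Submission
  imports Defs
begin

(* Write y = A x and v = Z^-1 y. Since 0 <= A <= I we have A^2 <= A, so |y|^2 <= <x, y> = <x, Z v>,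
   and Cauchy-Schwarz for the form of Z gives |y|^4 <= <x, Z x> <v, Z v>. The Kantorovich inequality
   <y, Z y> <y, Z^-1 y> <= (a + b)^2 / (4 a b) |y|^4, a consequence of Z (a - Z) (Z - b) >= 0 and AM-GM,
   then bounds <A x, Z A x> by (a + b)^2 / (4 a b) <x, Z x>. The bounds b <= Z <= a come from the
   extreme eigenvalues, the largest one being attained by maximising the form of Z on the unit sphere.

   Real parts of Hermitian forms are handled as the real inner product of complex^'n, viewed as a
   real Euclidean space. *)

lemma inner_vec_complex: "inner p q = Re (\<Sum>i\<in>UNIV. cnj (p $ i) * q $ i)"
  by (simp add: inner_vec_def inner_complex_def)

lemma Re_cquad_eq_inner: "Re (cquad M x) = inner x (M *v x)"
  by (simp add: cquad_def inner_vec_complex)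

lemmas matrix_vector_mult_scaleR_right =
  linear_cmul[OF bounded_linear.linear[OF matrix_vector_mul_bounded_linear]]

lemma scaleR_matrix_mult_vector:
  fixes A :: "'a::real_algebra_1^'n^'m"
  shows "(c *\<^sub>R A) *v x = c *\<^sub>R (A *v x)"
  by (simp add: vec_eq_iff matrix_vector_mult_def scaleR_sum_right)

lemma matrix_uminus_mult_vector:
  fixes A :: "'a::ring_1^'n^'m"
  shows "(- A) *v x = - (A *v x)"
  by (simp add: vec_eq_iff matrix_vector_mult_def flip: sum_negf)

lemma vector_smult_of_real: "of_real c *s x = c *\<^sub>R (x::'a::real_algebra_1^'n)"
  by (simp add: vec_eq_iff) (simp add: scaleR_conv_of_real)

lemma matrix_vector_mult_mat: "mat k *v x = k *s (x::'a::semiring_1^'n)"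
  by (vector matrix_vector_mult_def mat_def) (simp add: if_distrib if_distribR cong del: if_weak_cong)

lemma mat_of_real_mult_vector [simp]:
  "(mat (of_real c) :: 'a::real_algebra_1^'n^'n) *v x = c *\<^sub>R x"
  by (simp add: matrix_vector_mult_mat vector_smult_of_real)

lemma hermitian_mat_iff_cnj: "hermitian_mat M \<longleftrightarrow> (\<forall>i j. cnj (M $ i $ j) = M $ j $ i)"
  unfolding hermitian_mat_def by (metis complex_cnj_cnj)

lemma hermitian_mat_inner_commute:
  assumes "hermitian_mat M"
  shows "inner p (M *v q) = inner (M *v p) q"
proof -
  have M: "cnj (M $ j $ i) = M $ i $ j" for i j
    using assms unfolding hermitian_mat_iff_cnj by blast
  have "(\<Sum>i\<in>UNIV. cnj (p $ i) * (M *v q) $ i) = (\<Sum>j\<in>UNIV. cnj ((M *v p) $ j) * q $ j)"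
    unfolding matrix_vector_mult_def vec_lambda_beta sum_distrib_left sum_distrib_right
    by (subst sum.swap) (simp add: M mult_ac sum_distrib_left)
  then show ?thesis
    by (simp only: inner_vec_complex)
qed

lemma hermitian_mat_add: "hermitian_mat M \<Longrightarrow> hermitian_mat N \<Longrightarrow> hermitian_mat (M + N)"
  and hermitian_mat_diff: "hermitian_mat M \<Longrightarrow> hermitian_mat N \<Longrightarrow> hermitian_mat (M - N)"
  and hermitian_mat_uminus: "hermitian_mat M \<Longrightarrow> hermitian_mat (- M)"
  and hermitian_mat_scaleR: "hermitian_mat M \<Longrightarrow> hermitian_mat (c *\<^sub>R M)"
  and hermitian_mat_of_real: "hermitian_mat (mat (of_real c))"
  by (simp_all add: hermitian_mat_iff_cnj mat_def)

lemma hermitian_mat_congruence: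
  assumes "hermitian_mat A" "hermitian_mat Z"
  shows "hermitian_mat (A ** Z ** A)"
  unfolding hermitian_mat_iff_cnj
proof (intro allI)
  fix i j
  have A: "cnj (A $ k $ l) = A $ l $ k" and Z: "cnj (Z $ k $ l) = Z $ l $ k" for k l
    using assms unfolding hermitian_mat_iff_cnj by blast+
  show "cnj ((A ** Z ** A) $ i $ j) = (A ** Z ** A) $ j $ i"
    unfolding matrix_matrix_mult_def vec_lambda_beta sum_distrib_left sum_distrib_right
    by (subst sum.swap) (simp add: A Z mult_ac sum_distrib_left)
qed

lemma psd_mat_iff_inner: "psd_mat M \<longleftrightarrow> hermitian_mat M \<and> (\<forall>x. 0 \<le> inner x (M *v x))"
  by (simp add: psd_mat_def Re_cquad_eq_inner)

lemma loewner_le_iff_inner: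
  "loewner_le X Y \<longleftrightarrow> hermitian_mat (Y - X) \<and> (\<forall>x. inner x (X *v x) \<le> inner x (Y *v x))"
  by (simp add: loewner_le_def psd_mat_iff_inner matrix_vector_mult_diff_rdistrib inner_diff_right)

lemma loewner_le_matD: "loewner_le Z (mat (of_real c)) \<Longrightarrow> inner x (Z *v x) \<le> c * (norm x)\<^sup>2"
  and mat_loewner_leD: "loewner_le (mat (of_real c)) Z \<Longrightarrow> c * (norm x)\<^sup>2 \<le> inner x (Z *v x)"
  by (simp_all add: loewner_le_iff_inner power2_norm_eq_inner)

lemma hermitian_mat_quadratic_expand:
  assumes "hermitian_mat M"
  shows "inner (s *\<^sub>R p + t *\<^sub>R q) (M *v (s *\<^sub>R p + t *\<^sub>R q))
    = s\<^sup>2 * inner p (M *v p) + 2 * s * t * inner p (M *v q) + t\<^sup>2 * inner q (M *v q)"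
proof -
  have "inner q (M *v p) = inner p (M *v q)"
    unfolding hermitian_mat_inner_commute[OF assms, of q p] by (rule inner_commute)
  then show ?thesis
    by (simp add: matrix_vector_right_distrib matrix_vector_mult_scaleR_right inner_add_left
        inner_add_right algebra_simps power2_eq_square)
qed

lemma psd_mat_cauchy_schwarz:
  assumes "psd_mat M"
  shows "(inner p (M *v q))\<^sup>2 \<le> inner p (M *v p) * inner q (M *v q)"
proof -
  define P B Q where "P = inner p (M *v p)" and "B = inner p (M *v q)" and "Q = inner q (M *v q)"
  have herm: "hermitian_mat M" and nonneg: "\<And>x. 0 \<le> inner x (M *v x)"
    using assms by (auto simp: psd_mat_iff_inner)
  have expand: "0 \<le> s\<^sup>2 * P + 2 * s * t * B + t\<^sup>2 * Q" for s t
    using nonneg[of "s *\<^sub>R p + t *\<^sub>R q"]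
    unfolding hermitian_mat_quadratic_expand[OF herm] P_def B_def Q_def .
  \<comment> \<open>evaluate the nonnegative binary form at (Q, -B), (-B, P) and (1, -B)\<close>
  have "0 \<le> Q * (P * Q - B\<^sup>2)" "0 \<le> P * (P * Q - B\<^sup>2)" "0 \<le> P - 2 * B\<^sup>2 + B\<^sup>2 * Q"
    using expand[of Q "-B"] expand[of "-B" P] expand[of 1 "-B"]
    by (simp_all add: algebra_simps power2_eq_square)
  moreover have "0 \<le> P" "0 \<le> Q"
    using nonneg unfolding P_def Q_def by auto
  ultimately have "B\<^sup>2 \<le> P * Q"
    by (cases "0 < Q \<or> 0 < P") (auto simp: zero_le_mult_iff)
  then show ?thesis unfolding P_def B_def Q_def .
qed

lemma psd_mat_norm_mult_square_le:
  assumes "psd_mat M" "loewner_le M (mat (of_real c))"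
  shows "(norm (M *v v))\<^sup>2 \<le> c * inner v (M *v v)"
proof (cases "M *v v = 0")
  case False
  have nonneg: "0 \<le> inner v (M *v v)"
    using assms(1) by (simp add: psd_mat_iff_inner)
  have "(norm (M *v v))\<^sup>2 * (norm (M *v v))\<^sup>2 = (inner (M *v v) (M *v v))\<^sup>2"
    by (simp add: dot_square_norm power2_eq_square)
  also have "\<dots> \<le> inner (M *v v) (M *v (M *v v)) * inner v (M *v v)"
    using psd_mat_cauchy_schwarz[OF assms(1), of "M *v v" v] .
  also have "\<dots> \<le> (c * (norm (M *v v))\<^sup>2) * inner v (M *v v)"
    using loewner_le_matD[OF assms(2)] nonneg by (rule mult_right_mono)
  also have "\<dots> = (c * inner v (M *v v)) * (norm (M *v v))\<^sup>2"
    by (simp only: mult_ac)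
  finally show ?thesis
    by (rule mult_right_le_imp_le) (use False in simp)
qed simp

lemma hermitian_mat_max_eigenvalue:
  fixes Z :: "complex^'n^'n"
  assumes "hermitian_mat Z"
  obtains l where "mat_eigenvalue Z (of_real l)" "loewner_le Z (mat (of_real l))"
proof -
  let ?g = "\<lambda>v. inner v (Z *v v)"
  have "continuous_on (sphere 0 1) ?g"
    by (intro continuous_intros)
  moreover have "sphere (0 :: complex^'n) 1 \<noteq> {}"
    by simp
  ultimately obtain x where x: "x \<in> sphere 0 1" and max: "\<forall>u\<in>sphere 0 1. ?g u \<le> ?g x"
    using continuous_attains_sup[OF compact_sphere] by blast
  define F where "F = mat (of_real (?g x)) - Z"
  have "?g v \<le> ?g x * (norm v)\<^sup>2" for v
  proof (cases "v = 0")
    case False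
    have "(1 / norm v) *\<^sub>R v \<in> sphere 0 1"
      using False by simp
    then have "?g ((1 / norm v) *\<^sub>R v) \<le> ?g x"
      using max by blast
    then show ?thesis
      using False by (simp add: matrix_vector_mult_scaleR_right field_simps power2_eq_square)
  qed simp
  then have le: "loewner_le Z (mat (of_real (?g x)))"
    by (simp add: loewner_le_iff_inner hermitian_mat_diff hermitian_mat_of_real assms power2_norm_eq_inner)
  then have "psd_mat F"
    by (simp add: F_def loewner_le_def)
  moreover have "inner x (F *v x) = 0"
    using x by (simp add: F_def matrix_vector_mult_diff_rdistrib inner_diff_right flip: power2_norm_eq_inner)
  ultimately have "(inner (F *v x) (F *v x))\<^sup>2 \<le> 0"
    using psd_mat_cauchy_schwarz[of F "F *v x" x] by simp
  then have "Z *v x = of_real (?g x) *s x"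
    by (simp add: F_def matrix_vector_mult_diff_rdistrib matrix_vector_mult_mat)
  moreover have "x \<noteq> 0"
    using x by auto
  ultimately have "mat_eigenvalue Z (of_real (?g x))"
    unfolding mat_eigenvalue_def by blast
  then show thesis
    using le by (rule that)
qed

lemma loewner_le_trans:
  assumes XY: "loewner_le X Y" and YW: "loewner_le Y W"
  shows "loewner_le X W"
proof -
  have "hermitian_mat ((W - Y) + (Y - X))"
    using XY YW by (intro hermitian_mat_add) (simp_all add: loewner_le_iff_inner)
  then have "hermitian_mat (W - X)"
    by (metis add.commute add_diff_cancel_left' diff_add_cancel diff_diff_eq2)
  moreover have "inner x (X *v x) \<le> inner x (W *v x)" for x
    using XY YW unfolding loewner_le_iff_inner by (meson order_trans)
  ultimately show ?thesis
    by (simp add: loewner_le_iff_inner)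
qed

lemma loewner_le_mat_of_real: "c \<le> d \<Longrightarrow> loewner_le (mat (of_real c)) (mat (of_real d))"
  by (simp add: loewner_le_iff_inner hermitian_mat_diff hermitian_mat_of_real mult_right_mono)

lemma psd_mat_if_mat_loewner_le:
  assumes "0 \<le> b" "loewner_le (mat (of_real b)) Z"
  shows "psd_mat Z"
proof -
  have "loewner_le (mat (of_real 0)) Z"
    using loewner_le_trans[OF loewner_le_mat_of_real assms(2)] assms(1) .
  then show ?thesis
    by (simp add: loewner_le_def)
qed

lemma loewner_le_mat_if_eigenvalues_le:
  assumes "hermitian_mat Z" "\<forall>l. mat_eigenvalue Z l \<longrightarrow> Re l \<le> a"
  shows "loewner_le Z (mat (of_real a))"
proof -
  obtain l where "mat_eigenvalue Z (of_real l)" "loewner_le Z (mat (of_real l))"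
    using hermitian_mat_max_eigenvalue[OF assms(1)] .
  moreover have "l \<le> a"
    using assms(2) calculation(1) by fastforce
  ultimately show ?thesis
    by (meson loewner_le_trans loewner_le_mat_of_real)
qed

lemma mat_le_loewner_if_eigenvalues_ge:
  assumes "hermitian_mat Z" "\<forall>l. mat_eigenvalue Z l \<longrightarrow> b \<le> Re l"
  shows "loewner_le (mat (of_real b)) Z"
proof -
  have "\<forall>l. mat_eigenvalue (- Z) l \<longrightarrow> Re l \<le> - b"
  proof (intro allI impI)
    fix l
    assume "mat_eigenvalue (- Z) l"
    then have "mat_eigenvalue Z (- l)"
      unfolding mat_eigenvalue_def matrix_uminus_mult_vector vector_smult_lneg
      by (metis minus_equation_iff)
    then show "Re l \<le> - b"
      using assms(2) by fastforce
  qed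
  then have "loewner_le (- Z) (mat (of_real (- b)))"
    by (rule loewner_le_mat_if_eigenvalues_le[OF hermitian_mat_uminus[OF assms(1)]])
  moreover have "mat (of_real (- b)) - - Z = Z - mat (of_real b)"
    by (simp add: vec_eq_iff mat_def)
  ultimately show ?thesis
    by (simp add: loewner_le_def)
qed

lemma pd_mat_eigenvalue_pos:
  assumes "pd_mat Z" "mat_eigenvalue Z (of_real l)"
  shows "0 < l"
proof -
  obtain v where "v \<noteq> 0" "Z *v v = l *\<^sub>R v"
    using assms(2) by (auto simp: mat_eigenvalue_def vector_smult_of_real)
  with assms(1) have "0 < l * (norm v)\<^sup>2"
    by (auto simp: pd_mat_def Re_cquad_eq_inner power2_norm_eq_inner)
  then show ?thesis
    by (simp add: zero_less_mult_iff)
qed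

lemma surj_matrix_vector_mult_if_loewner_ge:
  assumes "0 < b" "loewner_le (mat (of_real b)) Z"
  shows "surj ((*v) Z)"
proof (rule vec.linear_inj_imp_surj[OF matrix_vector_mul_linear_gen])
  have "v = 0" if "Z *v v = 0" for v
  proof -
    have "b * (norm v)\<^sup>2 \<le> 0"
      using mat_loewner_leD[OF assms(2), of v] that by simp
    then show ?thesis
      using assms(1) by (simp add: mult_le_0_iff)
  qed
  then show "inj ((*v) Z)"
    by (simp add: vec.inj_iff_eq_0)
qed

lemma loewner_bounds_product_nonneg:
  assumes "loewner_le (mat (of_real b)) Z" "loewner_le Z (mat (of_real a))"
  shows "0 \<le> inner u (((mat (of_real a) - Z) ** (Z - mat (of_real b))) *v u)"
proof -
  define F where "F = mat (of_real a) - Z"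
  have "psd_mat F"
    using assms(2) by (simp add: F_def loewner_le_def)
  moreover have "mat (of_real (a - b)) - F = Z - mat (of_real b)"
    by (simp add: F_def vec_eq_iff mat_def)
  then have "loewner_le F (mat (of_real (a - b)))"
    using assms(1) by (simp add: loewner_le_def)
  ultimately have "(norm (F *v u))\<^sup>2 \<le> (a - b) * inner u (F *v u)"
    by (rule psd_mat_norm_mult_square_le)
  moreover have "inner u (F *v (F *v u)) = (norm (F *v u))\<^sup>2"
    using \<open>psd_mat F\<close> by (simp add: psd_mat_iff_inner hermitian_mat_inner_commute power2_norm_eq_inner)
  moreover have "(Z - mat (of_real b)) *v u = (a - b) *\<^sub>R u - F *v u"
    by (simp add: F_def matrix_vector_mult_diff_rdistrib scaleR_diff_left)
  ultimately show ?thesis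
    by (simp flip: F_def matrix_vector_mul_assoc
        add: matrix_vector_mult_diff_distrib matrix_vector_mult_scaleR_right inner_diff_right)
qed

lemma kantorovich_sum_bound:
  assumes lower: "loewner_le (mat (of_real b)) Z" and upper: "loewner_le Z (mat (of_real a))"
    and "0 \<le> b" and y: "Z *v v = y"
  shows "inner y (Z *v y) + a * b * inner v y \<le> (a + b) * (norm y)\<^sup>2"
proof -
  define F where "F = mat (of_real a) - Z"
  define p where "p = y - b *\<^sub>R v"
  have hermZ: "hermitian_mat Z"
    using psd_mat_if_mat_loewner_le[OF \<open>0 \<le> b\<close> lower] by (simp add: psd_mat_def)
  have Fp: "F *v p = ((mat (of_real a) - Z) ** (Z - mat (of_real b))) *v v"
    by (simp add: F_def p_def y flip: matrix_vector_mul_assoc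
        add: matrix_vector_mult_diff_rdistrib matrix_vector_mult_diff_distrib)
  \<comment> \<open>\<open>Z (a - Z) (Z - b) = (Z - b) (a - Z) (Z - b) + b (a - Z) (Z - b)\<close>, evaluated at \<open>v\<close>\<close>
  have "0 \<le> inner p (F *v p)"
    using upper by (simp add: F_def loewner_le_def psd_mat_iff_inner)
  moreover have "0 \<le> b * inner v (F *v p)"
    unfolding Fp using \<open>0 \<le> b\<close> loewner_bounds_product_nonneg[OF lower upper] by simp
  moreover have "inner y (F *v p) = inner p (F *v p) + b * inner v (F *v p)"
    by (simp add: p_def inner_diff_left)
  moreover have "inner y (F *v p) = (a + b) * (norm y)\<^sup>2 - a * b * inner v y - inner y (Z *v y)"
    using hermitian_mat_inner_commute[OF hermZ, of y v]
    by (simp add: F_def p_def y matrix_vector_mult_diff_rdistrib matrix_vector_mult_diff_distrib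
        matrix_vector_mult_scaleR_right inner_diff_right power2_norm_eq_inner inner_commute algebra_simps)
  ultimately show ?thesis
    by linarith
qed

lemma kantorovich_inequality:
  assumes lower: "loewner_le (mat (of_real b)) Z" and upper: "loewner_le Z (mat (of_real a))"
    and "0 \<le> b" "b \<le> a" and y: "Z *v v = y"
  shows "4 * a * b * inner y (Z *v y) * inner v y \<le> (a + b)\<^sup>2 * (norm y)^4"
proof -
  define \<gamma> \<beta> where "\<gamma> = inner y (Z *v y)" and "\<beta> = inner v y"
  have "0 \<le> \<gamma>" "0 \<le> \<beta>"
    using psd_mat_if_mat_loewner_le[OF \<open>0 \<le> b\<close> lower]
    unfolding \<gamma>_def \<beta>_def y[symmetric] by (simp_all add: psd_mat_iff_inner)
  have "4 * a * b * \<gamma> * \<beta> \<le> (\<gamma> + a * b * \<beta>)\<^sup>2"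
    using zero_le_power2[of "\<gamma> - a * b * \<beta>"] by (simp add: algebra_simps power2_eq_square)
  also have "\<dots> \<le> ((a + b) * (norm y)\<^sup>2)\<^sup>2"
    using kantorovich_sum_bound[OF lower upper \<open>0 \<le> b\<close> y] \<open>0 \<le> \<gamma>\<close> \<open>0 \<le> \<beta>\<close> assms(3,4)
    unfolding \<gamma>_def \<beta>_def by (intro power_mono) auto
  finally show ?thesis
    unfolding \<gamma>_def \<beta>_def by (simp add: power_mult_distrib flip: power_mult)
qed

lemma contraction_congruence_le:
  assumes "loewner_le 0 A" "loewner_le A (mat 1)"
    and lower: "loewner_le (mat (of_real b)) Z" and upper: "loewner_le Z (mat (of_real a))"
    and "0 < b" "b \<le> a"
  shows "4 * a * b * inner (A *v x) (Z *v (A *v x)) \<le> (a + b)\<^sup>2 * inner x (Z *v x)"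
proof -
  define y where "y = A *v x"
  obtain v where v: "Z *v v = y"
    using surj_matrix_vector_mult_if_loewner_ge[OF \<open>0 < b\<close> lower] by (metis surjD)
  have psdZ: "psd_mat Z"
    using psd_mat_if_mat_loewner_le[OF less_imp_le[OF \<open>0 < b\<close>] lower] .
  \<comment> \<open>\<open>A\<^sup>2 \<le> A\<close>\<close>
  have "(norm y)\<^sup>2 \<le> inner x y"
    using psd_mat_norm_mult_square_le[of A 1 x] assms(1,2) by (simp add: y_def loewner_le_def)
  then have "(norm y)^4 \<le> (inner x y)\<^sup>2"
    using power_mono[of "(norm y)\<^sup>2" "inner x y" 2] by (simp flip: power_mult)
  also have "\<dots> \<le> inner x (Z *v x) * inner v y"
    using psd_mat_cauchy_schwarz[OF psdZ, of x v] by (simp add: v)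
  finally have norm4: "(norm y)^4 \<le> inner x (Z *v x) * inner v y" .
  have "4 * a * b * inner y (Z *v y) * inner v y \<le> (a + b)\<^sup>2 * (norm y)^4"
    using kantorovich_inequality[OF lower upper _ \<open>b \<le> a\<close> v] \<open>0 < b\<close> by simp
  also have "\<dots> \<le> (a + b)\<^sup>2 * (inner x (Z *v x) * inner v y)"
    using norm4 by (rule mult_left_mono) simp
  finally have main: "(4 * a * b * inner y (Z *v y)) * inner v y \<le> ((a + b)\<^sup>2 * inner x (Z *v x)) * inner v y"
    by (simp only: mult_ac)
  show ?thesis
  proof (cases "y = 0")
    case True
    then show ?thesis
      using psdZ by (simp add: y_def psd_mat_iff_inner)
  next
    case False
    then have "v \<noteq> 0"
      using v by auto
    then have "0 < b * (norm v)\<^sup>2"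
      using \<open>0 < b\<close> by simp
    also have "\<dots> \<le> inner v y"
      using mat_loewner_leD[OF lower, of v] by (simp add: v)
    finally show ?thesis
      using main by (simp add: y_def mult_right_le_imp_le)
  qed
qed

theorem corollary1p5:
  fixes A Z :: "complex^'n^'n" and a b :: real
  assumes "loewner_le 0 A" and "loewner_le A (mat 1)"
    and "pd_mat Z"
    and "mat_eigenvalue Z (complex_of_real a)"
    and "\<forall>l. mat_eigenvalue Z l \<longrightarrow> Re l \<le> a"
    and "mat_eigenvalue Z (complex_of_real b)"
    and "\<forall>l. mat_eigenvalue Z l \<longrightarrow> b \<le> Re l"
  shows "loewner_le (A ** Z ** A) (((a + b)^2 / (4 * a * b)) *\<^sub>R Z)"
proof -
  define K where "K = (a + b)^2 / (4 * a * b)"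
  have hermA: "hermitian_mat A" and hermZ: "hermitian_mat Z"
    using assms(1,3) by (simp_all add: loewner_le_def psd_mat_def pd_mat_def)
  \<comment> \<open>only the eigenvalue bounds enter\<close>
  have "0 < b" "b \<le> a"
    using pd_mat_eigenvalue_pos[OF assms(3,6)] assms(5,6) by auto
  have "4 * a * b * inner (A *v x) (Z *v (A *v x)) \<le> (a + b)\<^sup>2 * inner x (Z *v x)" for x
    using contraction_congruence_le[OF assms(1,2) mat_le_loewner_if_eigenvalues_ge[OF hermZ assms(7)]
        loewner_le_mat_if_eigenvalues_le[OF hermZ assms(5)] \<open>0 < b\<close> \<open>b \<le> a\<close>] .
  then have "inner x ((A ** Z ** A) *v x) \<le> inner x ((K *\<^sub>R Z) *v x)" for x
    using \<open>0 < b\<close> \<open>b \<le> a\<close>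
    by (simp add: K_def hermitian_mat_inner_commute[OF hermA] scaleR_matrix_mult_vector
        field_simps flip: matrix_vector_mul_assoc)
  moreover have "hermitian_mat (K *\<^sub>R Z - A ** Z ** A)"
    by (simp add: hermitian_mat_diff hermitian_mat_scaleR hermitian_mat_congruence hermA hermZ)
  ultimately show ?thesis
    by (simp add: loewner_le_iff_inner K_def)
qed

end
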